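(* Let $\mathbf{M}^2$ be a connected smooth oriented surface and $\alpha:\mathbf{M}^2\to\mathbf{R}^4$ a smooth immersion with globally defined orthogonal asymptotic lines. Suppose that $\alpha$ has constant projection with distance of projection $r>0$, i.e. there exists a unit normal vector field $\nu$ along $\alpha$ such that $\langle II(p,v),\nu(p)\rangle = r\, I(p,v)$ for all $p\in\mathbf{M}^2$ and $v\in T_p\mathbf{M}$ (equivalently, for each $p$ the orthogonal projection of the ellipse of curvature $\varepsilon_\alpha(p)$ onto the $\nu(p)$-axis is the single point $r\nu(p)$). Suppose moreover that the Gaussian curvature satisfies $K(p)\neq r^2$ for all $p\in\mathbf{M}^2$. Then $\alpha$ is hyperspherical; more precisely, $\alpha(\mathbf{M}^2)$ is contained in a hypersphere of $\mathbf{R}^4$ of radius $1/r$.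
   Context: For an immersion $\alpha:\mathbf{M}^2\to\mathbf{R}^4$ and a local chart $(u,v)$, $E=\langle\alpha_u,\alpha_u\rangle$, $F=\langle\alpha_u,\alpha_v\rangle$, $G=\langle\alpha_v,\alpha_v\rangle$ and $I=E\,du^2+2F\,du\,dv+G\,dv^2$. For an orthonormal normal frame $\{\nu_1,\nu_2\}$, $e_i=\langle\alpha_{uu},\nu_i\rangle$, $f_i=\langle\alpha_{uv},\nu_i\rangle$, $g_i=\langle\alpha_{vv},\nu_i\rangle$, $II_{\nu_i}=e_i\,du^2+2f_i\,du\,dv+g_i\,dv^2$, and $II=II_{\nu_1}\nu_1+II_{\nu_2}\nu_2$. The Gaussian curvature is $K=\frac{e_1g_1-f_1^2+e_2g_2-f_2^2}{EG-F^2}$. The normal curvature vector is $\eta(p,v)=II(p,v)/I(p,v)$ and the ellipse of curvature $\varepsilon_\alpha(p)$ is the image of the unit tangent circle under $\eta(p,\cdot)$. A point is an inflection point if the ellipse of curvature there is a radial line segment (a segment contained in a line through the origin of $N_p\mathbf{M}$), equivalently $k_N(p)=0$ and $\Delta(p)=0$ where $k_N=\frac{E(f_1g_2-f_2g_1)-F(e_1g_2-e_2g_1)+G(e_1f_2-e_2f_1)}{2(EG-F^2)}$ and $\Delta$ is $\frac{1}{4(EG-F^2)}$ times the resultant determinant of $II_{\nu_1},II_{\nu_2}$. The asymptotic lines are the integral curves of the quadratic differential equation $(e_1f_2-e_2f_1)du^2+(e_1g_2-e_2g_1)du\,dv+(f_1g_2-f_2g_1)dv^2=0$ (equivalently $\mathrm{Jac}(II_{\nu_1},II_{\nu_2})=0$,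 Jacobian with respect to $(du,dv)$); geometrically, they are the directions whose normal curvature vectors are tangent lines from the origin of $N_p\mathbf{M}$ to $\varepsilon_\alpha(p)$; their singularities are the inflection points. "Globally defined orthogonal asymptotic lines" means the two asymptotic directions are defined away from inflection points on all of $\mathbf{M}^2$ and are orthogonal. An immersion is hyperspherical if its image is contained in a hypersphere (round $3$-sphere) of $\mathbf{R}^4$. *)

theory Defs
  imports "HOL-Analysis.Analysis"
begin

fun iter_dderiv :: "('a::real_normed_vector \<Rightarrow> 'b::real_normed_vector) \<Rightarrow> 'a list \<Rightarrow> 'a \<Rightarrow> 'b" where
  "iter_dderiv f [] = f"
| "iter_dderiv f (w # ws) = (\<lambda>x. frechet_derivative (iter_dderiv f ws) (at x) w)"

definition smooth_on :: "'a::real_normed_vector set \<Rightarrow> ('a \<Rightarrow> 'b::real_normed_vector) \<Rightarrow> bool" where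
  "smooth_on S f \<longleftrightarrow> open S \<and> (\<forall>ws. \<forall>x\<in>S. iter_dderiv f ws differentiable (at x))"

definition e_u :: "real^2" where "e_u = axis 1 1"
definition e_v :: "real^2" where "e_v = axis 2 1"

definition Xu :: "(real^2 \<Rightarrow> real^4) \<Rightarrow> real^2 \<Rightarrow> real^4" where
  "Xu X x = frechet_derivative X (at x) e_u"
definition Xv :: "(real^2 \<Rightarrow> real^4) \<Rightarrow> real^2 \<Rightarrow> real^4" where
  "Xv X x = frechet_derivative X (at x) e_v"
definition Xuu :: "(real^2 \<Rightarrow> real^4) \<Rightarrow> real^2 \<Rightarrow> real^4" where
  "Xuu X x = frechet_derivative (Xu X) (at x) e_u"
definition Xuv :: "(real^2 \<Rightarrow> real^4) \<Rightarrow> real^2 \<Rightarrow> real^4" where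
  "Xuv X x = frechet_derivative (Xu X) (at x) e_v"
definition Xvv :: "(real^2 \<Rightarrow> real^4) \<Rightarrow> real^2 \<Rightarrow> real^4" where
  "Xvv X x = frechet_derivative (Xv X) (at x) e_v"

definition EE :: "(real^2 \<Rightarrow> real^4) \<Rightarrow> real^2 \<Rightarrow> real" where "EE X x = Xu X x \<bullet> Xu X x"
definition FF :: "(real^2 \<Rightarrow> real^4) \<Rightarrow> real^2 \<Rightarrow> real" where "FF X x = Xu X x \<bullet> Xv X x"
definition GG :: "(real^2 \<Rightarrow> real^4) \<Rightarrow> real^2 \<Rightarrow> real" where "GG X x = Xv X x \<bullet> Xv X x"

definition first_ff :: "(real^2 \<Rightarrow> real^4) \<Rightarrow> real^2 \<Rightarrow> real \<Rightarrow> real \<Rightarrow> real" where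
  "first_ff X x du dv = EE X x * du^2 + 2 * FF X x * du * dv + GG X x * dv^2"

definition I_orth :: "(real^2 \<Rightarrow> real^4) \<Rightarrow> real^2 \<Rightarrow> real \<times> real \<Rightarrow> real \<times> real \<Rightarrow> bool" where
  "I_orth X x w1 w2 \<longleftrightarrow>
     EE X x * fst w1 * fst w2 + FF X x * (fst w1 * snd w2 + snd w1 * fst w2) + GG X x * snd w1 * snd w2 = 0"

definition ee :: "(real^2 \<Rightarrow> real^4) \<Rightarrow> real^4 \<Rightarrow> real^2 \<Rightarrow> real" where "ee X n x = Xuu X x \<bullet> n"
definition ff :: "(real^2 \<Rightarrow> real^4) \<Rightarrow> real^4 \<Rightarrow> real^2 \<Rightarrow> real" where "ff X n x = Xuv X x \<bullet> n"
definition gg :: "(real^2 \<Rightarrow> real^4) \<Rightarrow> real^4 \<Rightarrow> real^2 \<Rightarrow> real" where "gg X n x = Xvv X x \<bullet> n"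

text \<open>II_n = e du^2 + 2 f du dv + g dv^2, i.e. the component of II along the normal vector n.\<close>
definition second_ff :: "(real^2 \<Rightarrow> real^4) \<Rightarrow> real^4 \<Rightarrow> real^2 \<Rightarrow> real \<Rightarrow> real \<Rightarrow> real" where
  "second_ff X n x du dv = ee X n x * du^2 + 2 * ff X n x * du * dv + gg X n x * dv^2"

definition normal_frame :: "(real^2 \<Rightarrow> real^4) \<Rightarrow> real^2 \<Rightarrow> real^4 \<Rightarrow> real^4 \<Rightarrow> bool" where
  "normal_frame X x n1 n2 \<longleftrightarrow> norm n1 = 1 \<and> norm n2 = 1 \<and> n1 \<bullet> n2 = 0 \<and>
     n1 \<bullet> Xu X x = 0 \<and> n1 \<bullet> Xv X x = 0 \<and> n2 \<bullet> Xu X x = 0 \<and> n2 \<bullet> Xv X x = 0"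

definition gauss_curv :: "(real^2 \<Rightarrow> real^4) \<Rightarrow> real^4 \<Rightarrow> real^4 \<Rightarrow> real^2 \<Rightarrow> real" where
  "gauss_curv X n1 n2 x =
     (ee X n1 x * gg X n1 x - (ff X n1 x)^2 + ee X n2 x * gg X n2 x - (ff X n2 x)^2)
     / (EE X x * GG X x - (FF X x)^2)"

definition normal_curv :: "(real^2 \<Rightarrow> real^4) \<Rightarrow> real^4 \<Rightarrow> real^4 \<Rightarrow> real^2 \<Rightarrow> real" where
  "normal_curv X n1 n2 x =
     (let e1 = ee X n1 x; f1 = ff X n1 x; g1 = gg X n1 x;
          e2 = ee X n2 x; f2 = ff X n2 x; g2 = gg X n2 x in
      (EE X x * (f1 * g2 - f2 * g1) - FF X x * (e1 * g2 - e2 * g1) + GG X x * (e1 * f2 - e2 * f1))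
      / (2 * (EE X x * GG X x - (FF X x)^2)))"

text \<open>Delta = resultant determinant of II_n1, II_n2 divided by 4(EG-F^2).\<close>
definition Delta :: "(real^2 \<Rightarrow> real^4) \<Rightarrow> real^4 \<Rightarrow> real^4 \<Rightarrow> real^2 \<Rightarrow> real" where
  "Delta X n1 n2 x =
     (let e1 = ee X n1 x; f1 = ff X n1 x; g1 = gg X n1 x;
          e2 = ee X n2 x; f2 = ff X n2 x; g2 = gg X n2 x in
      det (vector [vector [e1, 2*f1, g1, 0], vector [0, e1, 2*f1, g1],
                   vector [e2, 2*f2, g2, 0], vector [0, e2, 2*f2, g2]] :: real^4^4)
      / (4 * (EE X x * GG X x - (FF X x)^2)))"

definition inflection :: "(real^2 \<Rightarrow> real^4) \<Rightarrow> real^4 \<Rightarrow> real^4 \<Rightarrow> real^2 \<Rightarrow> bool" where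
  "inflection X n1 n2 x \<longleftrightarrow> normal_curv X n1 n2 x = 0 \<and> Delta X n1 n2 x = 0"

definition asym_form :: "(real^2 \<Rightarrow> real^4) \<Rightarrow> real^4 \<Rightarrow> real^4 \<Rightarrow> real^2 \<Rightarrow> real \<Rightarrow> real \<Rightarrow> real" where
  "asym_form X n1 n2 x du dv =
     (let e1 = ee X n1 x; f1 = ff X n1 x; g1 = gg X n1 x;
          e2 = ee X n2 x; f2 = ff X n2 x; g2 = gg X n2 x in
      (e1 * f2 - e2 * f1) * du^2 + (e1 * g2 - e2 * g1) * du * dv + (f1 * g2 - f2 * g1) * dv^2)"

definition orth_asymptotic_at :: "(real^2 \<Rightarrow> real^4) \<Rightarrow> real^4 \<Rightarrow> real^4 \<Rightarrow> real^2 \<Rightarrow> bool" where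
  "orth_asymptotic_at X n1 n2 x \<longleftrightarrow>
     (\<exists>w1 w2. w1 \<noteq> (0,0) \<and> w2 \<noteq> (0,0) \<and> I_orth X x w1 w2 \<and>
        {w. w \<noteq> (0,0) \<and> asym_form X n1 n2 x (fst w) (snd w) = 0} =
        {w. w \<noteq> (0,0) \<and> (\<exists>c::real. w = (c * fst w1, c * snd w1) \<or> w = (c * fst w2, c * snd w2))})"

text \<open>A chart is a pair (U, psi) with psi a homeomorphism of the open set U onto an open set of R^2.
  The local parametrization is the inverse chart map.\<close>
definition param :: "'m set \<times> ('m \<Rightarrow> real^2) \<Rightarrow> real^2 \<Rightarrow> 'm" where
  "param c = inv_into (fst c) (snd c)"

definition cdom :: "'m set \<times> ('m \<Rightarrow> real^2) \<Rightarrow> (real^2) set" where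
  "cdom c = snd c ` fst c"

definition oriented_smooth_atlas :: "('m::topological_space set \<times> ('m \<Rightarrow> real^2)) set \<Rightarrow> bool" where
  "oriented_smooth_atlas A \<longleftrightarrow>
     (\<Union>c\<in>A. fst c) = UNIV \<and>
     (\<forall>c\<in>A. open (fst c) \<and> open (cdom c) \<and>
        homeomorphism (fst c) (cdom c) (snd c) (param c)) \<and>
     (\<forall>c1\<in>A. \<forall>c2\<in>A.
        smooth_on (snd c1 ` (fst c1 \<inter> fst c2)) (snd c2 \<circ> param c1) \<and>
        (\<forall>x \<in> snd c1 ` (fst c1 \<inter> fst c2).
           det (matrix (frechet_derivative (snd c2 \<circ> param c1) (at x))) > 0))"

definition smooth_immersion :: "('m set \<times> ('m \<Rightarrow> real^2)) set \<Rightarrow> ('m \<Rightarrow> real^4) \<Rightarrow> bool" where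
  "smooth_immersion A \<alpha> \<longleftrightarrow>
     (\<forall>c\<in>A. smooth_on (cdom c) (\<alpha> \<circ> param c) \<and>
        (\<forall>x\<in>cdom c. inj (frechet_derivative (\<alpha> \<circ> param c) (at x))))"

definition orth_asymptotic_lines :: "('m set \<times> ('m \<Rightarrow> real^2)) set \<Rightarrow> ('m \<Rightarrow> real^4) \<Rightarrow> bool" where
  "orth_asymptotic_lines A \<alpha> \<longleftrightarrow>
     (\<forall>c\<in>A. \<forall>x\<in>cdom c. \<forall>n1 n2. normal_frame (\<alpha> \<circ> param c) x n1 n2 \<longrightarrow>
        \<not> inflection (\<alpha> \<circ> param c) n1 n2 x \<longrightarrow> orth_asymptotic_at (\<alpha> \<circ> param c) n1 n2 x)"

definition unit_normal_field :: "('m set \<times> ('m \<Rightarrow> real^2)) set \<Rightarrow> ('m \<Rightarrow> real^4) \<Rightarrow> ('m \<Rightarrow> real^4) \<Rightarrow> bool" where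
  "unit_normal_field A \<alpha> \<nu> \<longleftrightarrow>
     (\<forall>p. norm (\<nu> p) = 1) \<and>
     (\<forall>c\<in>A. smooth_on (cdom c) (\<nu> \<circ> param c) \<and>
        (\<forall>x\<in>cdom c. \<nu> (param c x) \<bullet> Xu (\<alpha> \<circ> param c) x = 0 \<and>
                     \<nu> (param c x) \<bullet> Xv (\<alpha> \<circ> param c) x = 0))"

definition constant_projection :: "('m set \<times> ('m \<Rightarrow> real^2)) set \<Rightarrow> ('m \<Rightarrow> real^4) \<Rightarrow> ('m \<Rightarrow> real^4) \<Rightarrow> real \<Rightarrow> bool" where
  "constant_projection A \<alpha> \<nu> r \<longleftrightarrow>
     (\<forall>c\<in>A. \<forall>x\<in>cdom c. \<forall>du dv.
        second_ff (\<alpha> \<circ> param c) (\<nu> (param c x)) x du dv = r * first_ff (\<alpha> \<circ> param c) x du dv)"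

end

theory Submission
  imports Defs
begin

(* In a chart X with unit normal N = \<nu> \<circ> param c, constant projection says that the second
   fundamental form in the direction N is r times the first. Differentiating N \<bullet> X_u = N \<bullet> X_v = 0
   and N \<bullet> N = 1 shows that the Weingarten defects W = N_u + r X_u and Z = N_v + r X_v are normal
   to the surface and orthogonal to N, hence multiples of the second unit normal \<xi>. Symmetry of
   second derivatives (the Codazzi equation) gives W \<bullet> X_uv = Z \<bullet> X_uu and W \<bullet> X_vv = Z \<bullet> X_uv;
   if W or Z were nonzero this would force e_\<xi> g_\<xi> = f_\<xi>^2, i.e. K = r^2. Hence d\<nu> = -r d\<alpha>,
   so \<alpha> + \<nu> / r is locally constant, thus constant on the connected surface, and \<alpha> stays at
   distance |\<nu>| / r = 1 / r from it. *)

definition dderiv :: "('a::real_normed_vector \<Rightarrow> 'b::real_normed_vector) \<Rightarrow> 'a \<Rightarrow> 'a \<Rightarrow> 'b" where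
  "dderiv f w y = frechet_derivative f (at y) w"

lemma Xu_Xv_eq_dderiv:
  "Xu X = dderiv X e_u" "Xv X = dderiv X e_v"
  "Xuu X = dderiv (Xu X) e_u" "Xuv X = dderiv (Xu X) e_v" "Xvv X = dderiv (Xv X) e_v"
  by (simp_all add: fun_eq_iff dderiv_def Xu_def Xv_def Xuu_def Xuv_def Xvv_def)

lemma dderiv_eqI: "(f has_derivative f') (at y) \<Longrightarrow> dderiv f w y = f' w"
  by (simp add: dderiv_def frechet_derivative_at[symmetric])

lemma has_derivative_dderiv:
  "f differentiable (at y) \<Longrightarrow> (f has_derivative (\<lambda>w. dderiv f w y)) (at y)"
  using frechet_derivative_works by (auto simp: dderiv_def)

lemma linear_dderiv: "f differentiable (at y) \<Longrightarrow> linear (\<lambda>w. dderiv f w y)"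
  using has_derivative_dderiv has_derivative_linear by blast

lemma dderiv_inner:
  fixes A B :: "'a::real_normed_vector \<Rightarrow> 'b::real_inner"
  assumes "A differentiable (at y)" "B differentiable (at y)"
  shows "dderiv (\<lambda>z. A z \<bullet> B z) w y = dderiv A w y \<bullet> B y + A y \<bullet> dderiv B w y"
proof (rule dderiv_eqI)
  show "((\<lambda>z. A z \<bullet> B z) has_derivative (\<lambda>w. dderiv A w y \<bullet> B y + A y \<bullet> dderiv B w y)) (at y)"
    using has_derivative_inner[OF has_derivative_dderiv[OF assms(1)] has_derivative_dderiv[OF assms(2)]]
    by (simp add: add.commute)
qed

lemma dderiv_add_scaleR:
  assumes "A differentiable (at y)" "B differentiable (at y)"
  shows "dderiv (\<lambda>z. A z + c *\<^sub>R B z) w y = dderiv A w y + c *\<^sub>R dderiv B w y"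
  by (rule dderiv_eqI) (intro has_derivative_add has_derivative_scaleR_right has_derivative_dderiv assms)

lemma dderiv_inner_eq_0_if_constant_on:
  fixes A B :: "'a::real_normed_vector \<Rightarrow> 'b::real_inner"
  assumes "open U" "y \<in> U" "\<And>z. z \<in> U \<Longrightarrow> A z \<bullet> B z = c"
    and "A differentiable (at y)" "B differentiable (at y)"
  shows "dderiv A w y \<bullet> B y + A y \<bullet> dderiv B w y = 0"
proof -
  have "((\<lambda>z. A z \<bullet> B z) has_derivative (\<lambda>h. 0)) (at y)"
    by (rule has_derivative_transform_within_open[of "\<lambda>z. c"]) (use assms in auto)
  then show ?thesis
    using dderiv_inner[OF assms(4,5)] dderiv_eqI by metis
qed

lemma iter_dderiv_dderiv: "iter_dderiv (dderiv f v) ws = iter_dderiv f (ws @ [v])"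
  by (induction ws) (simp_all add: dderiv_def[abs_def])

lemma smooth_on_dderiv: "smooth_on U f \<Longrightarrow> smooth_on U (dderiv f v)"
  by (simp add: smooth_on_def iter_dderiv_dderiv)

lemma smooth_on_imp_differentiable: "smooth_on U f \<Longrightarrow> y \<in> U \<Longrightarrow> f differentiable (at y)"
  using iter_dderiv.simps(1) unfolding smooth_on_def by metis

lemma has_real_derivative_inner_along_line:
  fixes f :: "'a::real_normed_vector \<Rightarrow> 'b::real_inner"
  assumes "f differentiable (at (a + t *\<^sub>R w))"
  shows "((\<lambda>s. f (a + s *\<^sub>R w) \<bullet> k) has_real_derivative dderiv f w (a + t *\<^sub>R w) \<bullet> k) (at t)"
proof -
  have "((\<lambda>s. f (a + s *\<^sub>R w) \<bullet> k) has_derivative (\<lambda>s. dderiv f (s *\<^sub>R w) (a + t *\<^sub>R w) \<bullet> k)) (at t)"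
    by (rule derivative_eq_intros has_derivative_compose[of "\<lambda>s. a + s *\<^sub>R w"]
          has_derivative_dderiv assms refl | simp)+
  moreover have "dderiv f (s *\<^sub>R w) (a + t *\<^sub>R w) = s *\<^sub>R dderiv f w (a + t *\<^sub>R w)" for s
    using linear_dderiv[OF assms] by (rule linear_scale)
  moreover have "(\<lambda>s. s * (dderiv f w (a + t *\<^sub>R w) \<bullet> k)) = (*) (dderiv f w (a + t *\<^sub>R w) \<bullet> k)"
    by (simp add: fun_eq_iff)
  ultimately show ?thesis
    unfolding has_field_derivative_def by simp
qed

lemma second_difference_mvt:
  fixes f :: "'a::real_normed_vector \<Rightarrow> 'b::real_inner"
  assumes "0 < h"
    and diff: "\<And>s t. 0 \<le> s \<Longrightarrow> s \<le> h \<Longrightarrow> 0 \<le> t \<Longrightarrow> t \<le> h \<Longrightarrow>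
      f differentiable (at (x + s *\<^sub>R v + t *\<^sub>R w)) \<and> dderiv f v differentiable (at (x + s *\<^sub>R v + t *\<^sub>R w))"
  shows "\<exists>s t. 0 < s \<and> s < h \<and> 0 < t \<and> t < h \<and>
    (f (x + h *\<^sub>R v + h *\<^sub>R w) - f (x + h *\<^sub>R v) - f (x + h *\<^sub>R w) + f x) \<bullet> k
      = h\<^sup>2 * (dderiv (dderiv f v) w (x + s *\<^sub>R v + t *\<^sub>R w) \<bullet> k)"
proof -
  define P where "P s t = x + s *\<^sub>R v + t *\<^sub>R w" for s t
  have P_line: "x + t *\<^sub>R w + s *\<^sub>R v = P s t" "P s 0 + t *\<^sub>R w = P s t" for s t
    by (simp_all add: P_def algebra_simps)
  define \<phi> where "\<phi> s = f (P s h) \<bullet> k - f (P s 0) \<bullet> k" for s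
  define \<psi> where "\<psi> s t = dderiv f v (P s t) \<bullet> k" for s t
  have diffP: "f differentiable (at (P s t)) \<and> dderiv f v differentiable (at (P s t))"
    if "0 \<le> s" "s \<le> h" "0 \<le> t" "t \<le> h" for s t
    unfolding P_def using diff[OF that] .
  have along_v: "((\<lambda>s. f (P s t) \<bullet> k) has_real_derivative \<psi> s t) (at s)"
    if "0 \<le> s" "s \<le> h" "0 \<le> t" "t \<le> h" for s t
    unfolding \<psi>_def
    by (rule has_real_derivative_inner_along_line[of f "x + t *\<^sub>R w" s v k, unfolded P_line(1)])
      (use diffP[OF that] in blast)
  have "(\<phi> has_real_derivative \<psi> s h - \<psi> s 0) (at s)" if "0 \<le> s" "s \<le> h" for s
    unfolding \<phi>_def using that \<open>0 < h\<close> by (intro DERIV_diff along_v) auto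
  from MVT2[OF \<open>0 < h\<close> this]
  obtain s where s: "0 < s" "s < h" "\<phi> h - \<phi> 0 = (h - 0) * (\<psi> s h - \<psi> s 0)"
    by blast
  have "(\<psi> s has_real_derivative dderiv (dderiv f v) w (P s t) \<bullet> k) (at t)" if "0 \<le> t" "t \<le> h" for t
    unfolding \<psi>_def
    by (rule has_real_derivative_inner_along_line[of "dderiv f v" "P s 0" t w k, unfolded P_line(2)])
      (use diffP[of s t] that s in auto)
  from MVT2[OF \<open>0 < h\<close> this]
  obtain t where t: "0 < t" "t < h" "\<psi> s h - \<psi> s 0 = (h - 0) * (dderiv (dderiv f v) w (P s t) \<bullet> k)"
    by blast
  have "(f (x + h *\<^sub>R v + h *\<^sub>R w) - f (x + h *\<^sub>R v) - f (x + h *\<^sub>R w) + f x) \<bullet> k = \<phi> h - \<phi> 0"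
    by (simp add: \<phi>_def P_def inner_diff_left inner_add_left)
  then show ?thesis
    using s t by (auto simp: P_def power2_eq_square)
qed

lemma dist_add_scaleR_le:
  assumes "0 \<le> s" "s \<le> h" "0 \<le> t" "t \<le> h"
  shows "dist (x + s *\<^sub>R v + t *\<^sub>R w) x \<le> h * (norm v + norm w)"
proof -
  have "dist (x + s *\<^sub>R v + t *\<^sub>R w) x \<le> s * norm v + t * norm w"
    using norm_triangle_ineq[of "s *\<^sub>R v" "t *\<^sub>R w"] assms by (simp add: dist_norm add.assoc)
  also have "\<dots> \<le> h * norm v + h * norm w"
    using assms by (intro add_mono mult_right_mono) auto
  finally show ?thesis
    by (simp add: distrib_left)
qed

lemma mixed_partials_agree_nearby:
  fixes f :: "'a::real_normed_vector \<Rightarrow> 'b::real_inner"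
  assumes smooth: "smooth_on U f" and ball: "ball x \<delta> \<subseteq> U"
    and "0 < h" "h * (norm v + norm w) < \<delta>"
  shows "\<exists>p1 p2. dist p1 x \<le> h * (norm v + norm w) \<and> dist p2 x \<le> h * (norm v + norm w) \<and>
    dderiv (dderiv f v) w p1 \<bullet> k = dderiv (dderiv f w) v p2 \<bullet> k"
proof -
  have mvt: "\<exists>s t. 0 < s \<and> s < h \<and> 0 < t \<and> t < h \<and>
      (f (x + h *\<^sub>R v' + h *\<^sub>R w') - f (x + h *\<^sub>R v') - f (x + h *\<^sub>R w') + f x) \<bullet> k
        = h\<^sup>2 * (dderiv (dderiv f v') w' (x + s *\<^sub>R v' + t *\<^sub>R w') \<bullet> k)"
    if "{v', w'} = {v, w}" for v' w'
  proof (rule second_difference_mvt[OF \<open>0 < h\<close>])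
    fix s t assume "0 \<le> s" "s \<le> h" "0 \<le> t" "t \<le> h"
    then have "x + s *\<^sub>R v' + t *\<^sub>R w' \<in> U"
      using dist_add_scaleR_le[of s h t x v' w'] that assms(4) ball
      by (auto simp: doubleton_eq_iff dist_commute add.commute)
    then show "f differentiable (at (x + s *\<^sub>R v' + t *\<^sub>R w')) \<and>
        dderiv f v' differentiable (at (x + s *\<^sub>R v' + t *\<^sub>R w'))"
      using smooth by (auto intro: smooth_on_imp_differentiable smooth_on_dderiv)
  qed
  obtain s1 t1 where st1: "0 < s1" "s1 < h" "0 < t1" "t1 < h"
    and D1: "(f (x + h *\<^sub>R v + h *\<^sub>R w) - f (x + h *\<^sub>R v) - f (x + h *\<^sub>R w) + f x) \<bullet> k
      = h\<^sup>2 * (dderiv (dderiv f v) w (x + s1 *\<^sub>R v + t1 *\<^sub>R w) \<bullet> k)"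
    using mvt[of v w] by blast
  obtain s2 t2 where st2: "0 < s2" "s2 < h" "0 < t2" "t2 < h"
    and D2: "(f (x + h *\<^sub>R w + h *\<^sub>R v) - f (x + h *\<^sub>R w) - f (x + h *\<^sub>R v) + f x) \<bullet> k
      = h\<^sup>2 * (dderiv (dderiv f w) v (x + s2 *\<^sub>R w + t2 *\<^sub>R v) \<bullet> k)"
    using mvt[of w v] by (auto simp: insert_commute)
  have "dderiv (dderiv f v) w (x + s1 *\<^sub>R v + t1 *\<^sub>R w) \<bullet> k = dderiv (dderiv f w) v (x + s2 *\<^sub>R w + t2 *\<^sub>R v) \<bullet> k"
    using D1 D2 \<open>0 < h\<close> by (simp add: algebra_simps)
  then show ?thesis
    using dist_add_scaleR_le[of s1 h t1 x v w] dist_add_scaleR_le[of s2 h t2 x w v] st1 st2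
    by (auto simp: add.commute)
qed

lemma dderiv_commute:
  fixes f :: "'a::real_normed_vector \<Rightarrow> 'b::real_inner"
  assumes smooth: "smooth_on U f" and "x \<in> U"
  shows "dderiv (dderiv f v) w x = dderiv (dderiv f w) v x"
proof -
  define G1 where "G1 = dderiv (dderiv f v) w"
  define G2 where "G2 = dderiv (dderiv f w) v"
  define C where "C = norm v + norm w + 1"
  have "C > 0"
    by (simp add: C_def add_nonneg_pos)
  obtain \<delta> where "\<delta> > 0" and ball: "ball x \<delta> \<subseteq> U"
    using smooth \<open>x \<in> U\<close> open_contains_ball unfolding smooth_on_def by blast
  have "isCont G1 x" "isCont G2 x"
    unfolding G1_def G2_def using smooth \<open>x \<in> U\<close>
    by (auto intro!: differentiable_imp_continuous_within smooth_on_imp_differentiable smooth_on_dderiv)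
  have close: "\<bar>G1 x \<bullet> k - G2 x \<bullet> k\<bar> \<le> 2 * e" if "e > 0" for e k
  proof -
    obtain d1 where "d1 > 0" and d1: "\<And>p. dist p x < d1 \<Longrightarrow> \<bar>G1 p \<bullet> k - G1 x \<bullet> k\<bar> < e"
      using continuous_at_eps_delta[THEN iffD1, OF continuous_inner[OF \<open>isCont G1 x\<close> continuous_const]]
        \<open>e > 0\<close> by (fastforce simp: dist_real_def)
    obtain d2 where "d2 > 0" and d2: "\<And>p. dist p x < d2 \<Longrightarrow> \<bar>G2 p \<bullet> k - G2 x \<bullet> k\<bar> < e"
      using continuous_at_eps_delta[THEN iffD1, OF continuous_inner[OF \<open>isCont G2 x\<close> continuous_const]]
        \<open>e > 0\<close> by (fastforce simp: dist_real_def)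
    define h where "h = min \<delta> (min d1 d2) / (2 * C)"
    have "0 < h" "h * C < \<delta>" "h * C < d1" "h * C < d2"
      using \<open>\<delta> > 0\<close> \<open>d1 > 0\<close> \<open>d2 > 0\<close> \<open>C > 0\<close> by (auto simp: h_def)
    moreover have "h * (norm v + norm w) \<le> h * C"
      using \<open>0 < h\<close> by (simp add: C_def)
    ultimately obtain p1 p2 where "dist p1 x < d1" "dist p2 x < d2" "G1 p1 \<bullet> k = G2 p2 \<bullet> k"
      using mixed_partials_agree_nearby[OF smooth ball \<open>0 < h\<close>, of v w k, folded G1_def G2_def]
      by (smt (verit))
    then show ?thesis
      using d1[of p1] d2[of p2] by linarith
  qed
  have "G1 x \<bullet> k = G2 x \<bullet> k" for k
    using close[of "\<bar>G1 x \<bullet> k - G2 x \<bullet> k\<bar> / 4" k] by fastforce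
  from this[of "G1 x - G2 x"] have "(G1 x - G2 x) \<bullet> (G1 x - G2 x) = 0"
    by (simp only: inner_diff_left diff_self)
  then show ?thesis
    by (simp add: G1_def G2_def)
qed

lemma gram_det_eq_0_imp_parallel:
  fixes x y :: "'a::real_inner"
  assumes "(x \<bullet> x) * (y \<bullet> y) - (x \<bullet> y)\<^sup>2 = 0"
  shows "(y \<bullet> y) *\<^sub>R x = (x \<bullet> y) *\<^sub>R y"
proof -
  define d where "d = (y \<bullet> y) *\<^sub>R x - (x \<bullet> y) *\<^sub>R y"
  have "d \<bullet> d = (y \<bullet> y) * ((x \<bullet> x) * (y \<bullet> y) - (x \<bullet> y)\<^sup>2)"
    by (simp add: d_def inner_diff_left inner_diff_right inner_commute[of y x] power2_eq_square algebra_simps)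
  then show ?thesis
    using assms by (simp add: d_def)
qed

lemma e_u_e_v_components: "e_u $ 1 = 1" "e_u $ 2 = 0" "e_v $ 1 = 0" "e_v $ 2 = 1"
  by (simp_all add: e_u_def e_v_def axis_def)

lemma immersion_gram_det_nonzero:
  fixes X :: "real^2 \<Rightarrow> real^4"
  assumes "X differentiable (at x)" and inj: "inj (frechet_derivative X (at x))"
  shows "EE X x * GG X x - (FF X x)\<^sup>2 \<noteq> 0"
proof
  define L where "L = frechet_derivative X (at x)"
  have "linear L"
    using assms(1) frechet_derivative_works has_derivative_linear unfolding L_def by blast
  assume "EE X x * GG X x - (FF X x)\<^sup>2 = 0"
  then have "(GG X x) *\<^sub>R L e_u = (FF X x) *\<^sub>R L e_v"
    using gram_det_eq_0_imp_parallel unfolding EE_def FF_def GG_def Xu_def Xv_def L_def by blast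
  then have "L ((GG X x) *\<^sub>R e_u - (FF X x) *\<^sub>R e_v) = L 0"
    using \<open>linear L\<close> by (simp add: linear_diff linear_scale linear_0)
  then have "(GG X x) *\<^sub>R e_u - (FF X x) *\<^sub>R e_v = 0"
    using inj injD unfolding L_def by metis
  then have "((GG X x) *\<^sub>R e_u - (FF X x) *\<^sub>R e_v) $ 1 = 0"
    by simp
  then have "GG X x = 0"
    by (simp add: e_u_e_v_components)
  then have "L e_v = L 0"
    using \<open>linear L\<close> by (simp add: GG_def Xv_def L_def linear_0)
  then have "e_v = 0"
    using inj injD unfolding L_def by metis
  then show False
    using e_u_e_v_components(4) by simp
qed

lemma orthogonal_to_orthogonal_four_eq_0:
  fixes u1 u2 u3 u4 v :: "real^4"
  assumes nonzero: "u1 \<noteq> 0" "u2 \<noteq> 0" "u3 \<noteq> 0" "u4 \<noteq> 0"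
    and orth: "u1 \<bullet> u2 = 0" "u1 \<bullet> u3 = 0" "u1 \<bullet> u4 = 0" "u2 \<bullet> u3 = 0" "u2 \<bullet> u4 = 0" "u3 \<bullet> u4 = 0"
      "v \<bullet> u1 = 0" "v \<bullet> u2 = 0" "v \<bullet> u3 = 0" "v \<bullet> u4 = 0"
  shows "v = 0"
proof (rule ccontr)
  assume "v \<noteq> 0"
  have orth': "u2 \<bullet> u1 = 0" "u3 \<bullet> u1 = 0" "u4 \<bullet> u1 = 0" "u3 \<bullet> u2 = 0" "u4 \<bullet> u2 = 0" "u4 \<bullet> u3 = 0"
      "u1 \<bullet> v = 0" "u2 \<bullet> v = 0" "u3 \<bullet> v = 0" "u4 \<bullet> v = 0"
    using orth by (simp_all add: inner_commute)
  have distinct: "a \<noteq> b" if "a \<noteq> 0" "a \<bullet> b = 0" for a b :: "real^4"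
    using that by auto
  define S where "S = {u1, u2, u3, u4, v}"
  have "pairwise orthogonal S"
    unfolding S_def by (auto simp: pairwise_insert orthogonal_def orth orth')
  moreover have "0 \<notin> S"
    using nonzero \<open>v \<noteq> 0\<close> by (simp add: S_def)
  ultimately have "card S \<le> DIM(real^4)"
    using independent_bound pairwise_orthogonal_independent by blast
  moreover have "card S = 5"
    unfolding S_def using distinct[OF nonzero(1) orth(1)] distinct[OF nonzero(1) orth(2)]
      distinct[OF nonzero(1) orth(3)] distinct[OF nonzero(2) orth(4)] distinct[OF nonzero(2) orth(5)]
      distinct[OF nonzero(3) orth(6)] distinct[OF \<open>v \<noteq> 0\<close> orth(7)] distinct[OF \<open>v \<noteq> 0\<close> orth(8)]
      distinct[OF \<open>v \<noteq> 0\<close> orth(9)] distinct[OF \<open>v \<noteq> 0\<close> orth(10)]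
    by auto
  ultimately show False
    by simp
qed

lemma normal_vector_eq_multiple:
  fixes xu xv n \<xi> v :: "real^4"
  assumes gram: "(xu \<bullet> xu) * (xv \<bullet> xv) - (xu \<bullet> xv)\<^sup>2 \<noteq> 0"
    and n: "n \<noteq> 0" "n \<bullet> xu = 0" "n \<bullet> xv = 0"
    and \<xi>: "norm \<xi> = 1" "\<xi> \<bullet> xu = 0" "\<xi> \<bullet> xv = 0" "\<xi> \<bullet> n = 0"
    and v: "v \<bullet> xu = 0" "v \<bullet> xv = 0" "v \<bullet> n = 0"
  shows "v = (v \<bullet> \<xi>) *\<^sub>R \<xi>"
proof -
  define t where "t = (xu \<bullet> xu) *\<^sub>R xv - (xu \<bullet> xv) *\<^sub>R xu"
  have "xu \<noteq> 0"
    using gram by auto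
  have "t \<bullet> xv = (xu \<bullet> xu) * (xv \<bullet> xv) - (xu \<bullet> xv)\<^sup>2"
    by (simp add: t_def inner_diff_left power2_eq_square inner_commute[of xv xu])
  then have "t \<noteq> 0"
    using gram by auto
  have "v - (v \<bullet> \<xi>) *\<^sub>R \<xi> = 0"
  proof (rule orthogonal_to_orthogonal_four_eq_0[OF \<open>xu \<noteq> 0\<close> \<open>t \<noteq> 0\<close> \<open>n \<noteq> 0\<close>])
    show "\<xi> \<noteq> 0"
      using \<xi>(1) by auto
    show "xu \<bullet> t = 0" "xu \<bullet> n = 0" "xu \<bullet> \<xi> = 0" "t \<bullet> n = 0" "t \<bullet> \<xi> = 0" "n \<bullet> \<xi> = 0"
      using n \<xi> by (simp_all add: t_def inner_diff_left inner_diff_right inner_commute)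
    show "(v - (v \<bullet> \<xi>) *\<^sub>R \<xi>) \<bullet> xu = 0" "(v - (v \<bullet> \<xi>) *\<^sub>R \<xi>) \<bullet> t = 0"
      "(v - (v \<bullet> \<xi>) *\<^sub>R \<xi>) \<bullet> n = 0"
      using v \<xi> by (simp_all add: t_def inner_diff_left inner_diff_right inner_commute)
    show "(v - (v \<bullet> \<xi>) *\<^sub>R \<xi>) \<bullet> \<xi> = 0"
      using \<xi>(1) by (simp add: inner_diff_left norm_eq_1)
  qed
  then show ?thesis
    by simp
qed

lemma square_eq_product_if_nontrivial_kernel:
  fixes m k a b c :: real
  assumes "m * b = k * a" "m * c = k * b" "m \<noteq> 0 \<or> k \<noteq> 0"
  shows "a * c = b\<^sup>2"
proof (cases "m = 0")
  case True
  then show ?thesis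
    using assms by simp
next
  case False
  have "m * (a * c) = a * (m * c)"
    by simp
  also have "\<dots> = b * (k * a)"
    using assms(2) by simp
  also have "\<dots> = m * b\<^sup>2"
    using assms(1) by (simp add: power2_eq_square)
  finally show ?thesis
    using False by simp
qed

lemma codazzi_pair_eq_0:
  fixes xu xv n w z a b c :: "real^4"
  assumes gram: "(xu \<bullet> xu) * (xv \<bullet> xv) - (xu \<bullet> xv)\<^sup>2 \<noteq> 0"
    and n: "n \<noteq> 0" "n \<bullet> xu = 0" "n \<bullet> xv = 0"
    and w: "w \<bullet> xu = 0" "w \<bullet> xv = 0" "w \<bullet> n = 0"
    and z: "z \<bullet> xu = 0" "z \<bullet> xv = 0" "z \<bullet> n = 0"
    and codazzi: "w \<bullet> b = z \<bullet> a" "w \<bullet> c = z \<bullet> b"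
    and nonflat: "\<And>\<xi>. norm \<xi> = 1 \<Longrightarrow> \<xi> \<bullet> xu = 0 \<Longrightarrow> \<xi> \<bullet> xv = 0 \<Longrightarrow> \<xi> \<bullet> n = 0 \<Longrightarrow>
      (a \<bullet> \<xi>) * (c \<bullet> \<xi>) \<noteq> (b \<bullet> \<xi>)\<^sup>2"
  shows "w = 0 \<and> z = 0"
proof (rule ccontr)
  assume "\<not> (w = 0 \<and> z = 0)"
  then obtain u where u: "u \<noteq> 0" "u = w \<or> u = z"
    by blast
  define \<xi> where "\<xi> = u /\<^sub>R norm u"
  have \<xi>: "norm \<xi> = 1" "\<xi> \<bullet> xu = 0" "\<xi> \<bullet> xv = 0" "\<xi> \<bullet> n = 0"
    using u w z by (auto simp: \<xi>_def)
  have "w = (w \<bullet> \<xi>) *\<^sub>R \<xi>" "z = (z \<bullet> \<xi>) *\<^sub>R \<xi>"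
    using normal_vector_eq_multiple[OF gram n \<xi>] w z by blast+
  then have "(w \<bullet> \<xi>) * (b \<bullet> \<xi>) = (z \<bullet> \<xi>) * (a \<bullet> \<xi>)" "(w \<bullet> \<xi>) * (c \<bullet> \<xi>) = (z \<bullet> \<xi>) * (b \<bullet> \<xi>)"
    using codazzi by (metis inner_commute inner_scaleR_left)+
  moreover have "u \<bullet> \<xi> \<noteq> 0"
    using u(1) by (simp add: \<xi>_def dot_square_norm power2_eq_square)
  then have "w \<bullet> \<xi> \<noteq> 0 \<or> z \<bullet> \<xi> \<noteq> 0"
    using u(2) by auto
  ultimately show False
    using square_eq_product_if_nontrivial_kernel nonflat[OF \<xi>] by blast
qed

lemma smooth_on_Xu_Xv:
  "smooth_on U X \<Longrightarrow> smooth_on U (Xu X)" "smooth_on U X \<Longrightarrow> smooth_on U (Xv X)"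
  by (simp_all add: Xu_Xv_eq_dderiv smooth_on_dderiv)

lemma Xvu_eq_Xuv:
  fixes X :: "real^2 \<Rightarrow> real^4"
  shows "smooth_on U X \<Longrightarrow> z \<in> U \<Longrightarrow> dderiv (Xv X) e_u z = Xuv X z"
  by (simp add: Xu_Xv_eq_dderiv dderiv_commute)

lemma constant_projection_coefficients:
  assumes "\<And>du dv. second_ff X n x du dv = r * first_ff X x du dv"
  shows "ee X n x = r * EE X x" "ff X n x = r * FF X x" "gg X n x = r * GG X x"
proof -
  show ee: "ee X n x = r * EE X x" and gg: "gg X n x = r * GG X x"
    using assms[of 1 0] assms[of 0 1] by (simp_all add: second_ff_def first_ff_def)
  show "ff X n x = r * FF X x"
    using assms[of 1 1] ee gg by (simp add: second_ff_def first_ff_def algebra_simps)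
qed

lemma gauss_curv_eq_square_iff:
  assumes "ee X n x = r * EE X x" "ff X n x = r * FF X x" "gg X n x = r * GG X x"
    and "EE X x * GG X x - (FF X x)\<^sup>2 \<noteq> 0"
  shows "gauss_curv X n \<xi> x = r\<^sup>2 \<longleftrightarrow> ee X \<xi> x * gg X \<xi> x = (ff X \<xi> x)\<^sup>2"
proof -
  have "gauss_curv X n \<xi> x
      = (r\<^sup>2 * (EE X x * GG X x - (FF X x)\<^sup>2) + (ee X \<xi> x * gg X \<xi> x - (ff X \<xi> x)\<^sup>2))
        / (EE X x * GG X x - (FF X x)\<^sup>2)"
    using assms(1-3) by (simp add: gauss_curv_def power2_eq_square algebra_simps)
  also have "\<dots> = r\<^sup>2 + (ee X \<xi> x * gg X \<xi> x - (ff X \<xi> x)\<^sup>2) / (EE X x * GG X x - (FF X x)\<^sup>2)"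
    using assms(4) by (simp add: add_divide_distrib)
  finally show ?thesis
    using assms(4) by simp
qed

definition weingarten_defect ::
    "(real^2 \<Rightarrow> real^4) \<Rightarrow> (real^2 \<Rightarrow> real^4) \<Rightarrow> real \<Rightarrow> real^2 \<Rightarrow> real^2 \<Rightarrow> real^4" where
  "weingarten_defect X N r w z = dderiv N w z + r *\<^sub>R dderiv X w z"

lemma weingarten_defect_normal:
  fixes X N :: "real^2 \<Rightarrow> real^4"
  assumes smooth: "smooth_on U X" "smooth_on U N" and "z \<in> U"
    and normal: "\<And>z. z \<in> U \<Longrightarrow> norm (N z) = 1 \<and> N z \<bullet> Xu X z = 0 \<and> N z \<bullet> Xv X z = 0"
    and proj: "\<And>z du dv. z \<in> U \<Longrightarrow> second_ff X (N z) z du dv = r * first_ff X z du dv"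
    and "w \<in> {e_u, e_v}"
  shows "weingarten_defect X N r w z \<bullet> Xu X z = 0" "weingarten_defect X N r w z \<bullet> Xv X z = 0"
    "weingarten_defect X N r w z \<bullet> N z = 0"
proof -
  have "open U"
    using smooth smooth_on_def by blast
  have diff: "N differentiable (at z)" "Xu X differentiable (at z)" "Xv X differentiable (at z)"
    using smooth \<open>z \<in> U\<close> by (auto intro: smooth_on_imp_differentiable smooth_on_Xu_Xv)
  have coeff: "Xuu X z \<bullet> N z = r * EE X z" "Xuv X z \<bullet> N z = r * FF X z" "Xvv X z \<bullet> N z = r * GG X z"
    using constant_projection_coefficients[OF proj[OF \<open>z \<in> U\<close>]] by (simp_all add: ee_def ff_def gg_def)
  have "dderiv N w z \<bullet> Xu X z + N z \<bullet> dderiv (Xu X) w z = 0"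
    using dderiv_inner_eq_0_if_constant_on[OF \<open>open U\<close> \<open>z \<in> U\<close> _ diff(1,2)] normal by blast
  moreover have "dderiv N w z \<bullet> Xv X z + N z \<bullet> dderiv (Xv X) w z = 0"
    using dderiv_inner_eq_0_if_constant_on[OF \<open>open U\<close> \<open>z \<in> U\<close> _ diff(1,3)] normal by blast
  moreover have "dderiv N w z \<bullet> N z + N z \<bullet> dderiv N w z = 0"
    using dderiv_inner_eq_0_if_constant_on[OF \<open>open U\<close> \<open>z \<in> U\<close> _ diff(1,1)] normal
    by (metis norm_eq_1)
  moreover have "dderiv (Xv X) e_u z = Xuv X z"
    using Xvu_eq_Xuv[OF smooth(1) \<open>z \<in> U\<close>] .
  ultimately show "weingarten_defect X N r w z \<bullet> Xu X z = 0" "weingarten_defect X N r w z \<bullet> Xv X z = 0"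
    "weingarten_defect X N r w z \<bullet> N z = 0"
    using \<open>w \<in> {e_u, e_v}\<close> coeff normal[OF \<open>z \<in> U\<close>]
    by (auto simp: weingarten_defect_def Xu_Xv_eq_dderiv EE_def FF_def GG_def inner_add_left inner_add_right inner_commute)
qed

lemma weingarten_defect_codazzi:
  fixes X N :: "real^2 \<Rightarrow> real^4"
  assumes smooth: "smooth_on U X" "smooth_on U N" and "y \<in> U"
    and normal: "\<And>z w. z \<in> U \<Longrightarrow> w \<in> {e_u, e_v} \<Longrightarrow>
      weingarten_defect X N r w z \<bullet> Xu X z = 0 \<and> weingarten_defect X N r w z \<bullet> Xv X z = 0"
  shows "weingarten_defect X N r e_u y \<bullet> Xuv X y = weingarten_defect X N r e_v y \<bullet> Xuu X y"
    "weingarten_defect X N r e_u y \<bullet> Xvv X y = weingarten_defect X N r e_v y \<bullet> Xuv X y"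
proof -
  define W where "W = weingarten_defect X N r e_u"
  define Z where "Z = weingarten_defect X N r e_v"
  have "open U"
    using smooth smooth_on_def by blast
  have diff: "Xu X differentiable (at y)" "Xv X differentiable (at y)"
      "Xu N differentiable (at y)" "Xv N differentiable (at y)"
    using smooth \<open>y \<in> U\<close> by (auto intro: smooth_on_imp_differentiable smooth_on_Xu_Xv)
  have W_fun: "W = (\<lambda>z. Xu N z + r *\<^sub>R Xu X z)" and Z_fun: "Z = (\<lambda>z. Xv N z + r *\<^sub>R Xv X z)"
    by (simp_all add: W_def Z_def fun_eq_iff weingarten_defect_def Xu_Xv_eq_dderiv)
  then have diff_WZ: "W differentiable (at y)" "Z differentiable (at y)"
    using diff by auto
  \<comment> \<open>Both mixed derivatives equal \<open>M\<close> by the symmetry of second derivatives of \<open>N\<close> and \<open>X\<close>.\<close>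
  define M where "M = Xuv N y + r *\<^sub>R Xuv X y"
  have "dderiv W e_v y = M"
    unfolding W_fun M_def using dderiv_add_scaleR[OF diff(3,1)] by (simp add: Xu_Xv_eq_dderiv)
  moreover have "dderiv Z e_u y = M"
    unfolding Z_fun M_def using dderiv_add_scaleR[OF diff(4,2)]
    by (simp add: Xvu_eq_Xuv[OF smooth(1) \<open>y \<in> U\<close>] Xvu_eq_Xuv[OF smooth(2) \<open>y \<in> U\<close>])
  moreover have "dderiv W w y \<bullet> Xu X y + W y \<bullet> dderiv (Xu X) w y = 0"
      "dderiv W w y \<bullet> Xv X y + W y \<bullet> dderiv (Xv X) w y = 0"
      "dderiv Z w y \<bullet> Xu X y + Z y \<bullet> dderiv (Xu X) w y = 0"
      "dderiv Z w y \<bullet> Xv X y + Z y \<bullet> dderiv (Xv X) w y = 0" for w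
    using normal[of _ e_u, folded W_def] normal[of _ e_v, folded Z_def]
    by (auto intro!: dderiv_inner_eq_0_if_constant_on[OF \<open>open U\<close> \<open>y \<in> U\<close>] diff diff_WZ)
  ultimately show "W y \<bullet> Xuv X y = Z y \<bullet> Xuu X y" "W y \<bullet> Xvv X y = Z y \<bullet> Xuv X y"
    using Xvu_eq_Xuv[OF smooth(1) \<open>y \<in> U\<close>] by (metis Xu_Xv_eq_dderiv add_left_cancel)+
qed

lemma weingarten_defect_eq_0:
  fixes X N :: "real^2 \<Rightarrow> real^4"
  assumes smooth: "smooth_on U X" "smooth_on U N" and "y \<in> U"
    and immersion: "inj (frechet_derivative X (at y))"
    and normal: "\<And>z. z \<in> U \<Longrightarrow> norm (N z) = 1 \<and> N z \<bullet> Xu X z = 0 \<and> N z \<bullet> Xv X z = 0"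
    and proj: "\<And>z du dv. z \<in> U \<Longrightarrow> second_ff X (N z) z du dv = r * first_ff X z du dv"
    and curv: "\<And>\<xi>. normal_frame X y (N y) \<xi> \<Longrightarrow> gauss_curv X (N y) \<xi> y \<noteq> r\<^sup>2"
  shows "weingarten_defect X N r e_u y = 0 \<and> weingarten_defect X N r e_v y = 0"
proof -
  have gram: "EE X y * GG X y - (FF X y)\<^sup>2 \<noteq> 0"
    using immersion_gram_det_nonzero smooth_on_imp_differentiable[OF smooth(1) \<open>y \<in> U\<close>] immersion .
  have N: "N y \<noteq> 0" "N y \<bullet> Xu X y = 0" "N y \<bullet> Xv X y = 0"
    using normal[OF \<open>y \<in> U\<close>] by auto
  have nonflat: "(Xuu X y \<bullet> \<xi>) * (Xvv X y \<bullet> \<xi>) \<noteq> (Xuv X y \<bullet> \<xi>)\<^sup>2"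
    if "norm \<xi> = 1" "\<xi> \<bullet> Xu X y = 0" "\<xi> \<bullet> Xv X y = 0" "\<xi> \<bullet> N y = 0" for \<xi>
  proof -
    have "normal_frame X y (N y) \<xi>"
      using that normal[OF \<open>y \<in> U\<close>] by (simp add: normal_frame_def inner_commute)
    then have "ee X \<xi> y * gg X \<xi> y \<noteq> (ff X \<xi> y)\<^sup>2"
      using curv gauss_curv_eq_square_iff[OF constant_projection_coefficients[OF proj[OF \<open>y \<in> U\<close>]] gram]
      by blast
    then show ?thesis
      by (simp add: ee_def ff_def gg_def)
  qed
  show ?thesis
  proof (rule codazzi_pair_eq_0[OF _ N _ _ _ _ _ _ _ _ nonflat])
    show "(Xu X y \<bullet> Xu X y) * (Xv X y \<bullet> Xv X y) - (Xu X y \<bullet> Xv X y)\<^sup>2 \<noteq> 0"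
      using gram by (simp add: EE_def FF_def GG_def)
    show "weingarten_defect X N r e_u y \<bullet> Xu X y = 0" "weingarten_defect X N r e_u y \<bullet> Xv X y = 0"
      "weingarten_defect X N r e_u y \<bullet> N y = 0" "weingarten_defect X N r e_v y \<bullet> Xu X y = 0"
      "weingarten_defect X N r e_v y \<bullet> Xv X y = 0" "weingarten_defect X N r e_v y \<bullet> N y = 0"
      using weingarten_defect_normal[OF smooth \<open>y \<in> U\<close> normal proj] by auto
    show "weingarten_defect X N r e_u y \<bullet> Xuv X y = weingarten_defect X N r e_v y \<bullet> Xuu X y"
      "weingarten_defect X N r e_u y \<bullet> Xvv X y = weingarten_defect X N r e_v y \<bullet> Xuv X y"
      using weingarten_defect_codazzi[OF smooth \<open>y \<in> U\<close>] weingarten_defect_normal[OF smooth _ normal proj]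
      by blast+
  qed
qed

lemma linear_eq_0_if_eq_0_on_e_u_e_v:
  fixes f :: "real^2 \<Rightarrow> 'b::real_vector"
  assumes "linear f" "f e_u = 0" "f e_v = 0"
  shows "f h = 0"
proof -
  have "h = (h $ 1) *\<^sub>R e_u + (h $ 2) *\<^sub>R e_v"
    by (simp add: vec_eq_iff forall_2 e_u_e_v_components)
  then have "f h = (h $ 1) *\<^sub>R f e_u + (h $ 2) *\<^sub>R f e_v"
    using assms(1) by (metis linear_add linear_scale)
  then show ?thesis
    using assms(2,3) by simp
qed

lemma center_has_derivative_zero:
  fixes X N :: "real^2 \<Rightarrow> real^4"
  assumes "r \<noteq> 0" "X differentiable (at y)" "N differentiable (at y)"
    and "weingarten_defect X N r e_u y = 0" "weingarten_defect X N r e_v y = 0"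
  shows "((\<lambda>z. X z + (1 / r) *\<^sub>R N z) has_derivative (\<lambda>h. 0)) (at y)"
proof -
  have "linear (\<lambda>h. weingarten_defect X N r h y)"
    unfolding weingarten_defect_def
    using linear_dderiv[OF assms(3)] linear_dderiv[OF assms(2)]
    by (intro linear_compose_add linear_compose_scale_right)
  then have "dderiv N h y + r *\<^sub>R dderiv X h y = 0" for h
    using linear_eq_0_if_eq_0_on_e_u_e_v assms(4,5) unfolding weingarten_defect_def by blast
  moreover have "dderiv X h y + (1 / r) *\<^sub>R dderiv N h y = (1 / r) *\<^sub>R (dderiv N h y + r *\<^sub>R dderiv X h y)" for h
    using \<open>r \<noteq> 0\<close> by (simp add: scaleR_add_right)
  ultimately have "dderiv X h y + (1 / r) *\<^sub>R dderiv N h y = 0" for h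
    by simp
  moreover have "((\<lambda>z. X z + (1 / r) *\<^sub>R N z) has_derivative (\<lambda>h. dderiv X h y + (1 / r) *\<^sub>R dderiv N h y)) (at y)"
    by (intro has_derivative_add has_derivative_scaleR_right has_derivative_dderiv assms)
  ultimately show ?thesis
    by simp
qed

lemma chart_locally_constant:
  fixes g :: "'m::topological_space \<Rightarrow> 'b::real_normed_vector"
  assumes chart: "open (fst c)" "open (cdom c)" "homeomorphism (fst c) (cdom c) (snd c) (param c)"
    and deriv: "\<And>x. x \<in> cdom c \<Longrightarrow> ((g \<circ> param c) has_derivative (\<lambda>h. 0)) (at x)"
    and "p \<in> fst c"
  shows "eventually (\<lambda>q. g p = g q) (at p)"
proof -
  have "snd c p \<in> cdom c"
    using \<open>p \<in> fst c\<close> by (simp add: cdom_def)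
  then obtain \<delta> where "\<delta> > 0" and ball: "ball (snd c p) \<delta> \<subseteq> cdom c"
    using chart(2) open_contains_ball by blast
  have "\<exists>k. \<forall>x\<in>ball (snd c p) \<delta>. (g \<circ> param c) x = k"
  proof (rule has_derivative_zero_constant)
    fix x assume "x \<in> ball (snd c p) \<delta>"
    then show "((g \<circ> param c) has_derivative (\<lambda>h. 0)) (at x within ball (snd c p) \<delta>)"
      using ball deriv has_derivative_at_withinI by blast
  qed simp
  then obtain k where k: "\<And>x. x \<in> ball (snd c p) \<delta> \<Longrightarrow> g (param c x) = k"
    by auto
  define V where "V = snd c -` ball (snd c p) \<delta> \<inter> fst c"
  have "open V"
    using continuous_on_open_vimage[OF chart(1)] homeomorphism_cont1[OF chart(3)] unfolding V_def
    by blast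
  moreover have "p \<in> V"
    using \<open>p \<in> fst c\<close> \<open>\<delta> > 0\<close> by (simp add: V_def)
  moreover have "g p = g q" if "q \<in> V" for q
    using k[of "snd c q"] k[of "snd c p"] that \<open>p \<in> fst c\<close> \<open>\<delta> > 0\<close> homeomorphism_apply1[OF chart(3)]
    by (simp add: V_def)
  ultimately show ?thesis
    unfolding eventually_at_topological by blast
qed

lemma atlas_derivative_zero_imp_constant:
  fixes g :: "'m::topological_space \<Rightarrow> 'b::real_normed_vector"
  assumes "connected (UNIV :: 'm set)" and atlas: "oriented_smooth_atlas A"
    and deriv: "\<And>c x. c \<in> A \<Longrightarrow> x \<in> cdom c \<Longrightarrow> ((g \<circ> param c) has_derivative (\<lambda>h. 0)) (at x)"
  shows "g p = g q"
proof -
  have "eventually (\<lambda>q. g p = g q) (at p)" for p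
  proof -
    obtain c where "c \<in> A" "p \<in> fst c"
      using atlas unfolding oriented_smooth_atlas_def by blast
    moreover have "open (fst c) \<and> open (cdom c) \<and> homeomorphism (fst c) (cdom c) (snd c) (param c)"
      using atlas \<open>c \<in> A\<close> by (simp add: oriented_smooth_atlas_def)
    ultimately show ?thesis
      using chart_locally_constant deriv by blast
  qed
  then show ?thesis
    using connected_local_const[OF assms(1)] by blast
qed

lemma center_chart_has_derivative_zero:
  assumes immersion: "smooth_immersion A \<alpha>" and normal: "unit_normal_field A \<alpha> \<nu>"
    and proj: "constant_projection A \<alpha> \<nu> r" and "r \<noteq> 0"
    and curv: "\<forall>c\<in>A. \<forall>x\<in>cdom c. \<forall>n1 n2. normal_frame (\<alpha> \<circ> param c) x n1 n2 \<longrightarrow>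
      gauss_curv (\<alpha> \<circ> param c) n1 n2 x \<noteq> r\<^sup>2"
    and "c \<in> A" "x \<in> cdom c"
  shows "(((\<lambda>p. \<alpha> p + (1 / r) *\<^sub>R \<nu> p) \<circ> param c) has_derivative (\<lambda>h. 0)) (at x)"
proof -
  have smooth: "smooth_on (cdom c) (\<alpha> \<circ> param c)" "smooth_on (cdom c) (\<nu> \<circ> param c)"
    using immersion normal \<open>c \<in> A\<close> by (auto simp: smooth_immersion_def unit_normal_field_def)
  have "weingarten_defect (\<alpha> \<circ> param c) (\<nu> \<circ> param c) r e_u x = 0 \<and>
      weingarten_defect (\<alpha> \<circ> param c) (\<nu> \<circ> param c) r e_v x = 0"
    using \<open>c \<in> A\<close> \<open>x \<in> cdom c\<close> immersion normal proj curv
    by (intro weingarten_defect_eq_0[OF smooth \<open>x \<in> cdom c\<close>])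
      (auto simp: smooth_immersion_def unit_normal_field_def constant_projection_def)
  then show ?thesis
    using center_has_derivative_zero[OF \<open>r \<noteq> 0\<close>] smooth_on_imp_differentiable[OF smooth(1) \<open>x \<in> cdom c\<close>]
      smooth_on_imp_differentiable[OF smooth(2) \<open>x \<in> cdom c\<close>]
    by (simp add: comp_def)
qed

theorem theorem3p2:
  fixes A :: "('m::{t2_space, second_countable_topology} set \<times> ('m \<Rightarrow> real^2)) set"
    and \<alpha> \<nu> :: "'m \<Rightarrow> real^4"
    and r :: real
  assumes "connected (UNIV :: 'm set)"
    and "oriented_smooth_atlas A"
    and "smooth_immersion A \<alpha>"
    and "orth_asymptotic_lines A \<alpha>"
    and "r > 0"
    and "unit_normal_field A \<alpha> \<nu>"
    and "constant_projection A \<alpha> \<nu> r"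
    and "\<forall>c\<in>A. \<forall>x\<in>cdom c. \<forall>n1 n2. normal_frame (\<alpha> \<circ> param c) x n1 n2 \<longrightarrow>
           gauss_curv (\<alpha> \<circ> param c) n1 n2 x \<noteq> r^2"
  shows "\<exists>c0 :: real^4. range \<alpha> \<subseteq> sphere c0 (1 / r)"
proof -
  define center where "center = (\<lambda>p. \<alpha> p + (1 / r) *\<^sub>R \<nu> p)"
  have "((center \<circ> param c) has_derivative (\<lambda>h. 0)) (at x)" if "c \<in> A" "x \<in> cdom c" for c x
    using center_chart_has_derivative_zero[OF assms(3,6,7) _ assms(8) that] assms(5)
    unfolding center_def by simp
  then have "center q = center undefined" for q
    by (rule atlas_derivative_zero_imp_constant[OF assms(1,2)])
  moreover have "dist (center q) (\<alpha> q) = 1 / r" for q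
    using assms(5,6) by (simp add: center_def dist_norm unit_normal_field_def)
  ultimately have "\<alpha> q \<in> sphere (center undefined) (1 / r)" for q
    by (metis mem_sphere)
  then show ?thesis
    by blast
qed

end
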